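(* Assume (A1) with $\Omega\supseteq B(x^*,\delta)$, (A2), (A3), (A4) with exponent $r\in(0,1]$. Let $c_1>0$ be such that $\|d_k\|\le c_1\operatorname{dist}(x_k,X^* )$. Consider one pure LMMSS step with $\lambda_k=\|J_k^TF_k\|^r$ and $x_{k+1}=x_k+d_k$. Let $\eta\in(0,1)$, $L_5=L_0L_2(1+c_1)(2+c_1)$, $L_7=L_4c_1^2+L_5+L_3^r\|L\|^2c_1$, $\hat C=L_7+(1+(1+c_1)^{1+r})C$. If $x_k,x_{k+1}\in B(x^*,\delta/2)$ and $\operatorname{dist}(x_k,X^* )<\varepsilon$ with $\varepsilon\le(\eta\omega/\hat C)^{1/r}$, then $\operatorname{dist}(x_{k+1},X^* )\le\eta\operatorname{dist}(x_k,X^* )$.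
   Context: Let $F:\mathbb{R}^n\to\mathbb{R}^m$ be twice continuously differentiable with $m\ge n$, $J(x)$ its Jacobian, $\phi(x)=\tfrac12\|F(x)\|^2$, $\nabla\phi(x)=J(x)^TF(x)$. Norms are Euclidean/spectral. $X^*=\{x: J(x)^TF(x)=0\}\neq\emptyset$; $\operatorname{dist}(x,X^* )=\inf_{z\in X^*}\|x-z\|$, and $\bar x$ denotes a point of $X^*$ with $\|x-\bar x\|=\operatorname{dist}(x,X^* )$. Fix $x^*\in X^*$; $B(x^*,\delta)$ is the closed ball. $L\in\mathbb{R}^{p\times n}$ has rank $p\le n$. $F_k=F(x_k)$, $J_k=J(x_k)$; the LMMSS direction $d_k$ solves $(J_k^TJ_k+\lambda_kL^TL)d_k=-J_k^TF_k$. (A1) there are $\Omega$ and $\gamma>0$ with $\|J(x)v\|^2+\|Lv\|^2\ge\gamma\|v\|^2$ for $x\in\Omega$, all $v$. (A2) $\delta\in(0,1)$, $L_0>0$ with $\|J(x)-J(y)\|\le L_0\|x-y\|$ on $B(x^*,\delta)$. (A3) $\omega>0$ with $\omega\operatorname{dist}(x,X^* )\le\|J(x)^TF(x)\|$ on $B(x^*,\delta)$. (A4) $r\in(0,1]$, $C\ge0$ with $\|(J(x)-J(z))^TF(z)\|\le C\|x-z\|^{1+r}$ for $x\in B(x^*,\delta)$, $z\in X^*\cap B(x^*,\delta)$. Constants: $L_2=\max_{B(x^*,\delta)}\|J\|$, $\beta=\max_{B(x^*,\delta)}\|F\|$, $L_3=L_2^2+\beta L_0$; $L_4>0$ is a constant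 such that $\|\nabla\phi(y)-\nabla\phi(x)-J(x)^TJ(x)(y-x)\|\le L_4\|x-y\|^2+\|(J(x)-J(y))^TF(y)\|$ for all $x,y\in B(x^*,\delta)$. *)

theory Defs
  imports "HOL-Analysis.Analysis"
begin

definition specnorm :: "real^'n^'m \<Rightarrow> real" where
  "specnorm A = onorm (\<lambda>v. A *v v)"

definition C2_with_jacobian :: "(real^'n \<Rightarrow> real^'m) \<Rightarrow> (real^'n \<Rightarrow> real^'n^'m) \<Rightarrow> bool" where
  "C2_with_jacobian F J \<longleftrightarrow>
     (\<forall>x. (F has_derivative (\<lambda>h. J x *v h)) (at x)) \<and>
     (\<exists>J'::real^'n \<Rightarrow> ((real^'n) \<Rightarrow>\<^sub>L (real^'n^'m)).
        (\<forall>x. (J has_derivative blinfun_apply (J' x)) (at x)) \<and> continuous_on UNIV J')"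

text \<open>Gradient of phi = 1/2 |F|^2, i.e. J(x)^T F(x).\<close>
definition grad_phi :: "(real^'n \<Rightarrow> real^'m) \<Rightarrow> (real^'n \<Rightarrow> real^'n^'m) \<Rightarrow> real^'n \<Rightarrow> real^'n" where
  "grad_phi F J x = transpose (J x) *v F x"

definition stationary_set :: "(real^'n \<Rightarrow> real^'m) \<Rightarrow> (real^'n \<Rightarrow> real^'n^'m) \<Rightarrow> (real^'n) set" where
  "stationary_set F J = {x. grad_phi F J x = 0}"

end

theory Submission
  imports Defs
begin

text \<open>Let z be a stationary point nearest to x_k and D = dist(x_k, X*). The step equation
  writes grad phi(x_{k+1}) as the linearisation error of grad phi along d_k minus the
  regularisation term lambda_k L^T L d_k. The linearisation error is O(D^2) except for the term
  (J(x_k) - J(x_{k+1}))^T F(x_{k+1}), which is split through z so that (A4) applies at both ends;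
  and lambda_k = O(D^r) because grad phi grows at most linearly away from z. Hence
  |grad phi(x_{k+1})| <= Chat D^(1+r), and the error bound (A3) gives
  dist(x_{k+1}, X*) <= (Chat / omega) D^r D <= eta D.\<close>

lemma specnorm_nonneg: "0 \<le> specnorm (A::real^'n^'m)"
  unfolding specnorm_def by (simp add: onorm_pos_le)

lemma norm_matrix_vector_le_specnorm: "norm ((A::real^'n^'m) *v v) \<le> specnorm A * norm v"
  unfolding specnorm_def by (rule onorm) simp

lemma norm_transpose_vector_le_specnorm:
  "norm (transpose (A::real^'n^'m) *v v) \<le> specnorm A * norm v"
proof -
  let ?w = "transpose A *v v"
  have "(norm ?w)\<^sup>2 = inner v (A *v ?w)"
    by (simp add: power2_norm_eq_inner dot_lmul_matrix)
  also have "\<dots> \<le> norm v * norm (A *v ?w)"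
    by (rule norm_cauchy_schwarz)
  also have "\<dots> \<le> norm v * (specnorm A * norm ?w)"
    by (simp add: mult_left_mono norm_matrix_vector_le_specnorm)
  finally have "norm ?w * norm ?w \<le> (specnorm A * norm v) * norm ?w"
    by (simp add: power2_eq_square ac_simps)
  then show ?thesis
    using specnorm_nonneg[of A] by (cases "norm ?w = 0") auto
qed

lemma transpose_diff: "transpose (A - B) = transpose A - (transpose B :: 'a::ab_group_add^_^_)"
  by (simp add: transpose_def vec_eq_iff)

lemma C2_with_jacobian_continuous:
  assumes "C2_with_jacobian F J"
  shows "continuous_on UNIV F" "continuous_on UNIV J"
  using assms unfolding C2_with_jacobian_def
  by (meson continuous_at_imp_continuous_on has_derivative_continuous)+

lemma closed_stationary_set:
  assumes "C2_with_jacobian F J"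
  shows "closed (stationary_set F J)"
proof -
  have "continuous_on UNIV (grad_phi F J)"
    unfolding grad_phi_def transpose_matrix_vector vector_matrix_mult_def
    using C2_with_jacobian_continuous[OF assms]
    by (auto intro!: continuous_intros)
  then show ?thesis
    unfolding stationary_set_def by (rule closed_Collect_eq[OF _ continuous_on_const])
qed

lemma specnorm_le_SUP:
  assumes "continuous_on S J" "compact S" "x \<in> S"
  shows "specnorm (J x :: real^'n^'m) \<le> (SUP y\<in>S. specnorm (J y))"
proof (rule cSUP_upper[OF \<open>x \<in> S\<close>])
  let ?s = "\<lambda>y. \<Sum>i\<in>UNIV. \<Sum>j\<in>UNIV. \<bar>J y $ i $ j\<bar>"
  have "compact (?s ` S)"
    using assms(1) by (intro compact_continuous_image assms(2)) (auto intro!: continuous_intros)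
  then have "bdd_above (?s ` S)"
    by (meson bounded_imp_bdd_above compact_imp_bounded)
  then obtain M where "\<forall>y\<in>S. ?s y \<le> M"
    by (auto simp: bdd_above_def)
  moreover have "\<And>y. specnorm (J y) \<le> ?s y"
    unfolding specnorm_def by (rule onorm_le_matrix_component_sum)
  ultimately show "bdd_above ((\<lambda>y. specnorm (J y)) ` S)"
    by (intro bdd_aboveI2[of _ _ M]) (meson order_trans)
qed

lemma norm_le_SUP:
  assumes "continuous_on S F" "compact S" "x \<in> S"
  shows "norm (F x :: 'a::real_normed_vector) \<le> (SUP y\<in>S. norm (F y))"
proof (rule cSUP_upper[OF \<open>x \<in> S\<close>])
  have "compact ((\<lambda>y. norm (F y)) ` S)"
    using assms(1) by (intro compact_continuous_image assms(2)) (auto intro!: continuous_intros)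
  then show "bdd_above ((\<lambda>y. norm (F y)) ` S)"
    by (meson bounded_imp_bdd_above compact_imp_bounded)
qed

lemma norm_diff_le_specnorm_jacobian_bound:
  assumes "\<And>x. (F has_derivative (\<lambda>h. J x *v h)) (at x)" "convex S"
    and "\<And>x. x \<in> S \<Longrightarrow> specnorm (J x) \<le> M" "x \<in> S" "y \<in> S"
  shows "norm (F x - F y) \<le> M * norm (x - y)"
proof (rule differentiable_bound[where f' = "\<lambda>x h. J x *v h" and S = S])
  show "\<And>x. x \<in> S \<Longrightarrow> (F has_derivative (\<lambda>h. J x *v h)) (at x within S)"
    using assms(1) has_derivative_at_withinI by blast
  show "\<And>x. x \<in> S \<Longrightarrow> onorm (\<lambda>h. J x *v h) \<le> M"
    using assms(3) unfolding specnorm_def by blast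
qed (use assms in auto)

lemma C2_with_jacobian_bounds_cball:
  fixes c :: "real^'n" and \<rho> :: real
  assumes "C2_with_jacobian F J"
  defines "M \<equiv> SUP u\<in>cball c \<rho>. specnorm (J u)"
  shows "\<And>x. x \<in> cball c \<rho> \<Longrightarrow> specnorm (J x) \<le> M"
    and "\<And>x. x \<in> cball c \<rho> \<Longrightarrow> norm (F x) \<le> (SUP u\<in>cball c \<rho>. norm (F u))"
    and "\<And>x y. x \<in> cball c \<rho> \<Longrightarrow> y \<in> cball c \<rho> \<Longrightarrow> norm (F x - F y) \<le> M * norm (x - y)"
proof -
  show J_le: "\<And>x. x \<in> cball c \<rho> \<Longrightarrow> specnorm (J x) \<le> M"
    unfolding M_def using C2_with_jacobian_continuous(2)[OF assms(1)]
    by (intro specnorm_le_SUP) (auto intro: continuous_on_subset)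
  show "\<And>x. x \<in> cball c \<rho> \<Longrightarrow> norm (F x) \<le> (SUP u\<in>cball c \<rho>. norm (F u))"
    using C2_with_jacobian_continuous(1)[OF assms(1)]
    by (intro norm_le_SUP) (auto intro: continuous_on_subset)
  have "\<And>x. (F has_derivative (\<lambda>h. J x *v h)) (at x)"
    using assms(1) unfolding C2_with_jacobian_def by blast
  then show "\<And>x y. x \<in> cball c \<rho> \<Longrightarrow> y \<in> cball c \<rho> \<Longrightarrow> norm (F x - F y) \<le> M * norm (x - y)"
    by (rule norm_diff_le_specnorm_jacobian_bound[OF _ convex_cball J_le])
qed

lemma norm_grad_phi_le_dist_stationary:
  assumes "grad_phi F J z = 0"
    and "specnorm (J x) \<le> L2" "norm (F x - F z) \<le> L2 * norm (x - z)"
    and "specnorm (J x - J z) \<le> L0 * norm (x - z)" "norm (F z) \<le> \<beta>"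
  shows "norm (grad_phi F J x) \<le> (L2\<^sup>2 + \<beta> * L0) * norm (x - z)"
proof -
  have "grad_phi F J x = transpose (J x) *v (F x - F z) + transpose (J x - J z) *v F z"
    using assms(1) unfolding grad_phi_def
    by (simp del: transpose_matrix_vector add: transpose_diff matrix_vector_mult_diff_rdistrib
        matrix_vector_mult_diff_distrib)
  then have "norm (grad_phi F J x)
      \<le> norm (transpose (J x) *v (F x - F z)) + norm (transpose (J x - J z) *v F z)"
    by (simp add: norm_triangle_ineq)
  also have "\<dots> \<le> specnorm (J x) * norm (F x - F z) + specnorm (J x - J z) * norm (F z)"
    by (intro add_mono norm_transpose_vector_le_specnorm)
  also have "\<dots> \<le> L2 * (L2 * norm (x - z)) + (L0 * norm (x - z)) * \<beta>"
    using assms specnorm_nonneg order_trans[OF specnorm_nonneg assms(2)]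
      order_trans[OF specnorm_nonneg assms(4)]
    by (intro add_mono mult_mono) auto
  finally show ?thesis by (simp add: algebra_simps power2_eq_square)
qed

lemma norm_grad_phi_after_step_le:
  assumes "(transpose (J x) ** J x + lam *\<^sub>R (transpose L ** L)) *v d = - grad_phi F J x"
    and "0 \<le> lam"
  shows "norm (grad_phi F J (x + d))
    \<le> norm (grad_phi F J (x + d) - grad_phi F J x - (transpose (J x) ** J x) *v d)
       + lam * ((specnorm L)\<^sup>2 * norm d)"
proof -
  have "(transpose (J x) ** J x) *v d + lam *\<^sub>R (transpose L *v (L *v d)) = - grad_phi F J x"
    using assms(1) by (simp del: transpose_matrix_vector add: matrix_vector_mult_add_rdistrib
        scaleR_matrix_vector_assoc matrix_vector_mul_assoc)
  then have "grad_phi F J (x + d) = (grad_phi F J (x + d) - grad_phi F J x - (transpose (J x) ** J x) *v d)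
      - lam *\<^sub>R (transpose L *v (L *v d))"
    by (simp add: algebra_simps)
  then have "norm (grad_phi F J (x + d))
      \<le> norm (grad_phi F J (x + d) - grad_phi F J x - (transpose (J x) ** J x) *v d)
         + lam * norm (transpose L *v (L *v d))"
    using assms(2) norm_triangle_ineq4 by (metis abs_of_nonneg norm_scaleR)
  moreover have "norm (transpose L *v (L *v d)) \<le> specnorm L * (specnorm L * norm d)"
    using norm_transpose_vector_le_specnorm[of L "L *v d"] norm_matrix_vector_le_specnorm[of L d]
      specnorm_nonneg[of L] mult_left_mono order_trans by blast
  ultimately show ?thesis
    using assms(2) mult_left_mono by (fastforce simp: power2_eq_square mult.assoc)
qed

lemma norm_transpose_jacobian_diff_le:
  assumes "norm (transpose (J x - J z) *v F z) \<le> a" "norm (transpose (J y - J z) *v F z) \<le> b"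
    and "specnorm (J x - J y) \<le> c" "norm (F y - F z) \<le> e"
  shows "norm (transpose (J x - J y) *v F y) \<le> a + b + c * e"
proof -
  let ?u = "transpose (J x - J z) *v F z" and ?v = "transpose (J y - J z) *v F z"
    and ?w = "transpose (J x - J y) *v (F y - F z)"
  have split: "transpose (J x - J y) *v F y = ?u - ?v + ?w"
    by (simp del: transpose_matrix_vector add: transpose_diff matrix_vector_mult_diff_rdistrib
        matrix_vector_mult_diff_distrib algebra_simps)
  have "norm ?w \<le> specnorm (J x - J y) * norm (F y - F z)"
    by (rule norm_transpose_vector_le_specnorm)
  also have "\<dots> \<le> c * e"
    using assms(3,4) order_trans[OF specnorm_nonneg assms(3)] by (intro mult_mono) auto
  finally have "norm ?w \<le> c * e" .
  then show ?thesis
    unfolding split using assms(1,2) norm_triangle_ineq[of "?u - ?v" ?w] norm_triangle_ineq4[of ?u ?v]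
    by linarith
qed

lemma lmmss_residual_estimate:
  fixes D nd nz lam N L0 L2 L3 L4 C c1 r :: real
  assumes "0 \<le> D" "D \<le> 1" "0 < r" "r \<le> 1"
    and "0 \<le> nd" "nd \<le> c1 * D" "0 \<le> nz" "nz \<le> (1 + c1) * D"
    and "0 \<le> lam" "lam \<le> L3 powr r * D powr r"
    and "0 \<le> L0" "0 \<le> L2" "0 \<le> L4" "0 \<le> C" "0 \<le> c1"
  shows "L4 * nd\<^sup>2 + (C * D powr (1 + r) + C * nz powr (1 + r) + L0 * nd * (L2 * nz)) + lam * (N\<^sup>2 * nd)
    \<le> (L4 * c1\<^sup>2 + L0 * L2 * (1 + c1) * (2 + c1) + L3 powr r * N\<^sup>2 * c1
        + (1 + (1 + c1) powr (1 + r)) * C) * D powr (1 + r)"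
proof -
  define P where "P = D powr (1 + r)"
  have "D powr 2 \<le> D powr (1 + r)"
    by (rule powr_mono') (use assms(1-4) in auto)
  then have D2: "D\<^sup>2 \<le> P"
    unfolding P_def using assms(1) by simp
  have DrD: "D powr r * D = P"
    unfolding P_def using assms(1) by (simp add: powr_add)
  have "nd\<^sup>2 \<le> c1\<^sup>2 * D\<^sup>2"
    using power_mono[OF assms(6) assms(5), of 2] by (simp add: power_mult_distrib)
  also have "\<dots> \<le> c1\<^sup>2 * P"
    using D2 by (simp add: mult_left_mono)
  finally have "L4 * nd\<^sup>2 \<le> L4 * c1\<^sup>2 * P"
    using assms(13) by (metis mult.assoc mult_left_mono)
  moreover have "C * nz powr (1 + r) \<le> (1 + c1) powr (1 + r) * C * P"
    using powr_mono2[of "1 + r" nz "(1 + c1) * D"] assms(1,3,7,8,14,15)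
    unfolding P_def by (simp add: powr_mult mult_left_mono ac_simps)
  moreover have "L0 * nd * (L2 * nz) \<le> L0 * L2 * (1 + c1) * (2 + c1) * P"
  proof -
    have "L0 * nd * (L2 * nz) \<le> L0 * (c1 * D) * (L2 * ((1 + c1) * D))"
      using assms by (intro mult_mono mult_left_mono) auto
    also have "\<dots> = L0 * L2 * (1 + c1) * c1 * D\<^sup>2"
      by (simp add: power2_eq_square ac_simps)
    also have "\<dots> \<le> L0 * L2 * (1 + c1) * (2 + c1) * P"
      using D2 assms(1,11,12,15) by (intro mult_mono) (auto intro: mult_left_mono)
    finally show ?thesis .
  qed
  moreover have "lam * (N\<^sup>2 * nd) \<le> L3 powr r * N\<^sup>2 * c1 * P"
  proof -
    have "lam * (N\<^sup>2 * nd) \<le> (L3 powr r * D powr r) * (N\<^sup>2 * (c1 * D))"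
      using assms by (intro mult_mono mult_left_mono) auto
    also have "\<dots> = L3 powr r * N\<^sup>2 * c1 * (D powr r * D)"
      by (simp add: ac_simps)
    finally show ?thesis using DrD by simp
  qed
  ultimately show ?thesis
    unfolding P_def[symmetric] distrib_right by linarith
qed

lemma le_mult_of_superlinear_bound:
  fixes \<omega> K r D D' \<epsilon> \<eta> :: real
  assumes "0 < \<omega>" "0 < K" "0 < r" "0 \<le> \<eta>" "0 \<le> D" "D < \<epsilon>"
    and "\<epsilon> \<le> (\<eta> * \<omega> / K) powr (1 / r)" "\<omega> * D' \<le> K * D powr (1 + r)"
  shows "D' \<le> \<eta> * D"
proof -
  have "D powr r \<le> ((\<eta> * \<omega> / K) powr (1 / r)) powr r"
    using assms(3,5-7) by (intro powr_mono2) auto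
  also have "\<dots> = \<eta> * \<omega> / K"
    using assms(1-4) by (simp add: powr_powr)
  finally have "K * D powr r \<le> \<eta> * \<omega>"
    using assms(2) by (simp add: field_simps)
  then have "K * D powr (1 + r) \<le> \<omega> * (\<eta> * D)"
    using assms(5) by (simp add: powr_add mult_right_mono[of _ _ D, simplified ac_simps] ac_simps)
  then have "\<omega> * D' \<le> \<omega> * (\<eta> * D)"
    using assms(8) by linarith
  then show ?thesis
    using assms(1) by simp
qed

theorem mainTheorem8:
  fixes F :: "real^'n \<Rightarrow> real^'m" and J :: "real^'n \<Rightarrow> real^'n^'m"
    and Lm :: "real^'n^'p" and xs xk xk1 d :: "real^'n"
    and lam \<gamma> \<delta> L0 \<omega> r C L4 c1 \<eta> \<epsilon> :: real
  defines "Xs \<equiv> stationary_set F J"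
  defines "L2 \<equiv> (SUP x\<in>cball xs \<delta>. specnorm (J x))"
  defines "\<beta> \<equiv> (SUP x\<in>cball xs \<delta>. norm (F x))"
  defines "L3 \<equiv> L2\<^sup>2 + \<beta> * L0"
  defines "lam \<equiv> norm (grad_phi F J xk) powr r"
  defines "L5 \<equiv> L0 * L2 * (1 + c1) * (2 + c1)"
  defines "L7 \<equiv> L4 * c1\<^sup>2 + L5 + L3 powr r * (specnorm Lm)\<^sup>2 * c1"
  defines "Chat \<equiv> L7 + (1 + (1 + c1) powr (1 + r)) * C"
  assumes C2: "C2_with_jacobian F J"
    and mn: "CARD('n) \<le> CARD('m)"
    and rankL: "rank Lm = CARD('p)" and pn: "CARD('p) \<le> CARD('n)"
    and Xs_ne: "Xs \<noteq> {}" and xs_in: "xs \<in> Xs"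
    \<comment> \<open>(A1) with Omega containing B(x*,delta)\<close>
    and A1: "\<gamma> > 0" "\<And>x v. x \<in> cball xs \<delta> \<Longrightarrow> (norm (J x *v v))\<^sup>2 + (norm (Lm *v v))\<^sup>2 \<ge> \<gamma> * (norm v)\<^sup>2"
    \<comment> \<open>(A2)\<close>
    and A2: "0 < \<delta>" "\<delta> < 1" "L0 > 0"
      "\<And>x y. x \<in> cball xs \<delta> \<Longrightarrow> y \<in> cball xs \<delta> \<Longrightarrow> specnorm (J x - J y) \<le> L0 * norm (x - y)"
    \<comment> \<open>(A3)\<close>
    and A3: "\<omega> > 0" "\<And>x. x \<in> cball xs \<delta> \<Longrightarrow> \<omega> * infdist x Xs \<le> norm (grad_phi F J x)"
    \<comment> \<open>(A4)\<close>
    and A4: "0 < r" "r \<le> 1" "C \<ge> 0"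
      "\<And>x z. x \<in> cball xs \<delta> \<Longrightarrow> z \<in> Xs \<inter> cball xs \<delta> \<Longrightarrow>
         norm (transpose (J x - J z) *v F z) \<le> C * norm (x - z) powr (1 + r)"
    \<comment> \<open>the constant L4\<close>
    and L4: "L4 > 0"
      "\<And>x y. x \<in> cball xs \<delta> \<Longrightarrow> y \<in> cball xs \<delta> \<Longrightarrow>
         norm (grad_phi F J y - grad_phi F J x - (transpose (J x) ** J x) *v (y - x))
           \<le> L4 * (norm (x - y))\<^sup>2 + norm (transpose (J x - J y) *v F y)"
    \<comment> \<open>the LMMSS step\<close>
    and step: "(transpose (J xk) ** J xk + lam *\<^sub>R (transpose Lm ** Lm)) *v d = - grad_phi F J xk"
    and xk1_def: "xk1 = xk + d"
    and c1: "c1 > 0" "norm d \<le> c1 * infdist xk Xs"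
    and eta: "0 < \<eta>" "\<eta> < 1"
    and balls: "xk \<in> cball xs (\<delta>/2)" "xk1 \<in> cball xs (\<delta>/2)"
    and close: "infdist xk Xs < \<epsilon>" "\<epsilon> \<le> (\<eta> * \<omega> / Chat) powr (1 / r)"
  shows "infdist xk1 Xs \<le> \<eta> * infdist xk Xs"
proof -
  \<comment> \<open>(A1) and the dimension and rank hypotheses only serve to produce the constant c1,
    which is assumed here.\<close>
  let ?g = "grad_phi F J" and ?B = "cball xs \<delta>"
  define D where "D = infdist xk Xs"
  obtain z where z: "z \<in> Xs" "D = dist xk z"
    using infdist_attains_inf[OF closed_stationary_set[OF C2], of xk] Xs_ne
    unfolding D_def Xs_def by metis
  have D0: "0 \<le> D" unfolding D_def by (rule infdist_nonneg)
  have "D \<le> \<delta> / 2"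
    using infdist_le[OF xs_in, of xk] balls(1) unfolding D_def by (simp add: dist_commute)
  then have B: "xk \<in> ?B" "xk1 \<in> ?B" "z \<in> ?B" and D1: "D \<le> 1"
    using balls A2(1,2) z(2) dist_triangle[of xs z xk] by (auto simp: dist_commute)
  note bounds = C2_with_jacobian_bounds_cball[OF C2, where c = xs and \<rho> = \<delta>, folded L2_def \<beta>_def]
  note Jb = bounds(1) and Fb = bounds(2) and Flip = bounds(3)
  have L2_nonneg: "0 \<le> L2" and L3_nonneg: "0 \<le> L3"
    using order_trans[OF specnorm_nonneg Jb[OF B(1)]] order_trans[OF norm_ge_zero Fb[OF B(1)]] A2(3)
    unfolding L3_def by auto
  have nd: "norm d \<le> c1 * D" and nz: "norm (xk - z) = D" "norm (xk1 - z) \<le> (1 + c1) * D"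
    using c1(2) z(2) norm_triangle_ineq[of "xk - z" d]
    unfolding D_def xk1_def by (auto simp: dist_norm algebra_simps)
  have "norm (?g xk) \<le> L3 * D"
    using norm_grad_phi_le_dist_stationary[OF _ Jb[OF B(1)] Flip[OF B(1,3)] A2(4)[OF B(1,3)] Fb[OF B(3)]]
      z(1) nz(1) unfolding L3_def Xs_def stationary_set_def by simp
  then have lam: "lam \<le> L3 powr r * D powr r"
    unfolding lam_def using A4(1) by (simp add: powr_mono2 flip: powr_mult)
  have "norm (?g xk1) \<le> L4 * (norm d)\<^sup>2 + norm (transpose (J xk - J xk1) *v F xk1)
      + lam * ((specnorm Lm)\<^sup>2 * norm d)"
    using norm_grad_phi_after_step_le[OF step] L4(2)[OF B(1,2)]
    unfolding lam_def xk1_def by (simp add: norm_minus_commute)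
  also have "\<dots> \<le> L4 * (norm d)\<^sup>2 + (C * D powr (1 + r) + C * norm (xk1 - z) powr (1 + r)
      + L0 * norm d * (L2 * norm (xk1 - z))) + lam * ((specnorm Lm)\<^sup>2 * norm d)"
    using norm_transpose_jacobian_diff_le[OF A4(4)[OF B(1)] A4(4)[OF B(2)] A2(4)[OF B(1,2)] Flip[OF B(2,3)]]
      z(1) B(3) nz(1) unfolding xk1_def by simp
  also have "\<dots> \<le> Chat * D powr (1 + r)"
    unfolding Chat_def L7_def L5_def
    by (rule lmmss_residual_estimate)
      (use D0 D1 A4(1-3) nd nz lam A2(3) L2_nonneg L4(1) c1(1) in \<open>auto simp: lam_def\<close>)
  finally have "\<omega> * infdist xk1 Xs \<le> Chat * D powr (1 + r)"
    using A3(2)[OF B(2)] by linarith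
  moreover have "0 < Chat"
    unfolding Chat_def L7_def L5_def
    using L4(1) c1(1) A2(3) L2_nonneg A4(3) by (intro add_pos_nonneg) auto
  ultimately show ?thesis
    using le_mult_of_superlinear_bound[OF A3(1) _ A4(1) _ D0] close eta(1) unfolding D_def by auto
qed

end
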